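(* Let $R$ be a unital commutative Hausdorff topological ring with dense group of units, $E\in\mathrm{TopSMod}_R$, $\lambda\in\Lambda^\infty$ and $U\subset\underline E(\lambda)$ a subset. There exists an open subfunctor $\mathcal U\subset\underline E$ (of functors $\Lambda^\infty\to\mathrm{Top}$) with $\mathcal U(\lambda)=U$ if and only if $U$ is open in the DeWitt topology. Such a functor is unique, and it is given by $\mathcal U=\underline E_{U_R}$ where $U_R=\underline E(\varepsilon)(U)=\mathcal U(R)$.
   Context: $\lambda^n=R[\theta_1,\dots,\theta_n]$ and $\lambda^\infty=R[\theta_i:i\in\mathbb N]$ are Grassmann algebras on odd generators ($\lambda^n=\bigoplus_I R\theta_I$ with product topology, $\lambda^\infty$ with direct limit topology); $\Lambda^\infty$ is the category with objects the $\lambda^n$ ($n\in\mathbb N$, $\lambda^0=R$) and $\lambda^\infty$, morphisms the even unital $R$-algebra morphisms; $\varepsilon:\lambda\to R$ kills all $\theta_i$. $\mathrm{TopSMod}_R$: Hausdorff graded topological $R$-modules $E=E_0\oplus E_1$. $E\otimes\lambda^N=\prod_{|I|\le N}E\theta_I$ (product topology), $E\otimes\lambda^\infty=\varinjlim_N E\otimes\lambda^N$ in Top; $\underline E(\lambda)=(E\otimes\lambda)_0=E_0\otimes\lambda_0\oplus E_1\otimes\lambda_1$ with the subspace topology, and $\underline E(\varphi)=(\mathrm{id}\otimes\varphi)|_{\underline E(\lambda)}$, giving a functor $\underline E:\Lambda^\infty\to\mathrm{Top}$. A subfunctor $\mathcal U\subset\underline E$ satisfies $\mathcal U(\mu)\subset\underline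 E(\mu)$ for all $\mu$, with $\underline E(\varphi)$ mapping $\mathcal U(\mu)$ into $\mathcal U(\mu')$ and $\mathcal U(\varphi)$ the restriction; it is open if each $\mathcal U(\mu)$ is open in $\underline E(\mu)$. For open $V\subset E_0$, $\underline E_V$ is the subfunctor $\underline E_V(\mu)=\underline E(\varepsilon)^{-1}(V)$. The DeWitt topology on $\underline E(\lambda)$ is the coarsest topology making $\underline E(\varepsilon):\underline E(\lambda)\to E_0$ continuous. *)

theory Defs
  imports "HOL-Analysis.Analysis"
begin

text \<open>Fin n stands for the Grassmann algebra lambda^n (generators theta_0,...,theta_(n-1)),
  Fin 0 is R itself, and Inf stands for lambda^infinity (generators theta_i, i a natural number).\<close>

datatype gobj = Fin nat | Inf

fun idx_ok :: "gobj \<Rightarrow> nat set \<Rightarrow> bool" where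
  "idx_ok (Fin n) I = (I \<subseteq> {..<n})"
| "idx_ok Inf I = finite I"

section \<open>Grassmann algebras: elements are coefficient functions I \<mapsto> coefficient of theta_I\<close>

definition grass :: "gobj \<Rightarrow> (nat set \<Rightarrow> 'r::comm_ring_1) set" where
  "grass mu = {g. (\<forall>I. g I \<noteq> 0 \<longrightarrow> idx_ok mu I) \<and> finite {I. g I \<noteq> 0}}"

text \<open>theta_I theta_J = (-1)^(number of pairs i in I, j in J with j < i) theta_(I union J) for disjoint I, J.\<close>
definition gsign :: "nat set \<Rightarrow> nat set \<Rightarrow> 'r::comm_ring_1" where
  "gsign I J = (-1) ^ card {(i, j). i \<in> I \<and> j \<in> J \<and> j < i}"

definition gmul :: "(nat set \<Rightarrow> 'r::comm_ring_1) \<Rightarrow> (nat set \<Rightarrow> 'r) \<Rightarrow> nat set \<Rightarrow> 'r" where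
  "gmul g h K = (if finite K then (\<Sum>I\<in>Pow K. gsign I (K - I) * g I * h (K - I)) else 0)"

definition gone :: "nat set \<Rightarrow> 'r::comm_ring_1" where
  "gone = (\<lambda>I. if I = {} then 1 else 0)"

definition theta :: "nat set \<Rightarrow> nat set \<Rightarrow> 'r::comm_ring_1" where
  "theta I = (\<lambda>K. if K = I then 1 else 0)"

definition is_even :: "(nat set \<Rightarrow> 'a::zero) \<Rightarrow> bool" where
  "is_even g \<longleftrightarrow> (\<forall>I. odd (card I) \<longrightarrow> g I = 0)"

definition is_odd :: "(nat set \<Rightarrow> 'a::zero) \<Rightarrow> bool" where
  "is_odd g \<longleftrightarrow> (\<forall>I. even (card I) \<longrightarrow> g I = 0)"

definition gmorph :: "gobj \<Rightarrow> gobj \<Rightarrow> ((nat set \<Rightarrow> 'r::comm_ring_1) \<Rightarrow> (nat set \<Rightarrow> 'r)) \<Rightarrow> bool" where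
  "gmorph mu mu' phi \<longleftrightarrow>
     (\<forall>g\<in>grass mu. phi g \<in> grass mu') \<and>
     (\<forall>g\<in>grass mu. \<forall>h\<in>grass mu. phi (\<lambda>I. g I + h I) = (\<lambda>I. phi g I + phi h I)) \<and>
     (\<forall>c. \<forall>g\<in>grass mu. phi (\<lambda>I. c * g I) = (\<lambda>I. c * phi g I)) \<and>
     (\<forall>g\<in>grass mu. \<forall>h\<in>grass mu. phi (gmul g h) = gmul (phi g) (phi h)) \<and>
     phi gone = gone \<and>
     (\<forall>g\<in>grass mu. is_even g \<longrightarrow> is_even (phi g)) \<and>
     (\<forall>g\<in>grass mu. is_odd g \<longrightarrow> is_odd (phi g))"

definition geps :: "(nat set \<Rightarrow> 'r::comm_ring_1) \<Rightarrow> nat set \<Rightarrow> 'r" where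
  "geps g = (\<lambda>K. if K = {} then g {} else 0)"

definition top_ring_dense_units :: "'r::{comm_ring_1, topological_semigroup_mult, topological_group_add, t2_space} itself \<Rightarrow> bool" where
  "top_ring_dense_units _ \<longleftrightarrow> closure {u::'r. \<exists>v. u * v = 1} = UNIV"

definition topsmod ::
  "('r::{comm_ring_1, topological_semigroup_mult, topological_group_add, t2_space} \<Rightarrow> 'e::{ab_group_add, topological_group_add, t2_space} \<Rightarrow> 'e)
   \<Rightarrow> 'e set \<Rightarrow> 'e set \<Rightarrow> bool" where
  "topsmod sm E0 E1 \<longleftrightarrow>
     (\<forall>a b x. sm (a + b) x = sm a x + sm b x) \<and>
     (\<forall>a x y. sm a (x + y) = sm a x + sm a y) \<and>
     (\<forall>a b x. sm (a * b) x = sm a (sm b x)) \<and>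
     (\<forall>x. sm 1 x = x) \<and>
     continuous_on UNIV (\<lambda>p. sm (fst p) (snd p)) \<and>
     (0 \<in> E0 \<and> (\<forall>x\<in>E0. \<forall>y\<in>E0. x + y \<in> E0) \<and> (\<forall>a. \<forall>x\<in>E0. sm a x \<in> E0)) \<and>
     (0 \<in> E1 \<and> (\<forall>x\<in>E1. \<forall>y\<in>E1. x + y \<in> E1) \<and> (\<forall>a. \<forall>x\<in>E1. sm a x \<in> E1)) \<and>
     E0 \<inter> E1 = {0} \<and> (\<forall>x. \<exists>a\<in>E0. \<exists>b\<in>E1. x = a + b)"

text \<open>Underlying set of E tensor lambda (coefficient functions I \<mapsto> e_I).\<close>
definition tens_set :: "gobj \<Rightarrow> (nat set \<Rightarrow> 'e::zero) set" where
  "tens_set mu = {f. (\<forall>I. f I \<noteq> 0 \<longrightarrow> idx_ok mu I) \<and> finite {I. f I \<noteq> 0}}"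

text \<open>E tensor lambda^N = product over I subset {0..N-1} of E theta_I, product topology
  (the other coordinates are forced to be 0).\<close>
definition ptop :: "nat \<Rightarrow> (nat set \<Rightarrow> 'e::{zero,topological_space}) topology" where
  "ptop N = product_topology (\<lambda>I. if I \<subseteq> {..<N} then euclidean else top_of_set {0}) UNIV"

text \<open>E tensor lambda^infinity: direct limit in Top of the E tensor lambda^N.\<close>
definition tens_top :: "gobj \<Rightarrow> (nat set \<Rightarrow> 'e::{zero,topological_space}) topology" where
  "tens_top mu = (case mu of Fin n \<Rightarrow> ptop n
     | Inf \<Rightarrow> topology (\<lambda>U. U \<subseteq> tens_set Inf \<and>
                 (\<forall>N. openin (ptop N) (U \<inter> topspace (ptop N)))))"

text \<open>underline E(lambda) = even part of E tensor lambda.\<close>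
definition Eset :: "'e set \<Rightarrow> 'e set \<Rightarrow> gobj \<Rightarrow> (nat set \<Rightarrow> 'e::zero) set" where
  "Eset E0 E1 mu = {f \<in> tens_set mu. \<forall>I. f I \<in> (if even (card I) then E0 else E1)}"

definition Etop :: "'e set \<Rightarrow> 'e set \<Rightarrow> gobj \<Rightarrow> (nat set \<Rightarrow> 'e::{zero,topological_space}) topology" where
  "Etop E0 E1 mu = subtopology (tens_top mu) (Eset E0 E1 mu)"

text \<open>underline E(phi) = id tensor phi.\<close>
definition Emap :: "('r::comm_ring_1 \<Rightarrow> 'e::comm_monoid_add \<Rightarrow> 'e)
    \<Rightarrow> ((nat set \<Rightarrow> 'r) \<Rightarrow> (nat set \<Rightarrow> 'r)) \<Rightarrow> (nat set \<Rightarrow> 'e) \<Rightarrow> nat set \<Rightarrow> 'e" where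
  "Emap sm phi f = (\<lambda>J. \<Sum>I\<in>{I. f I \<noteq> 0}. sm (phi (theta I) J) (f I))"

definition subfunctor :: "('r::comm_ring_1 \<Rightarrow> 'e::comm_monoid_add \<Rightarrow> 'e) \<Rightarrow> 'e set \<Rightarrow> 'e set
    \<Rightarrow> (gobj \<Rightarrow> (nat set \<Rightarrow> 'e) set) \<Rightarrow> bool" where
  "subfunctor sm E0 E1 UU \<longleftrightarrow>
     (\<forall>mu. UU mu \<subseteq> Eset E0 E1 mu) \<and>
     (\<forall>mu mu' phi. gmorph mu mu' phi \<longrightarrow> Emap sm phi ` UU mu \<subseteq> UU mu')"

definition open_subfunctor :: "('r::comm_ring_1 \<Rightarrow> 'e::{comm_monoid_add,topological_space} \<Rightarrow> 'e)
    \<Rightarrow> 'e set \<Rightarrow> 'e set \<Rightarrow> (gobj \<Rightarrow> (nat set \<Rightarrow> 'e) set) \<Rightarrow> bool" where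
  "open_subfunctor sm E0 E1 UU \<longleftrightarrow>
     subfunctor sm E0 E1 UU \<and> (\<forall>mu. openin (Etop E0 E1 mu) (UU mu))"

definition EV :: "('r::comm_ring_1 \<Rightarrow> 'e::comm_monoid_add \<Rightarrow> 'e) \<Rightarrow> 'e set \<Rightarrow> 'e set
    \<Rightarrow> (nat set \<Rightarrow> 'e) set \<Rightarrow> gobj \<Rightarrow> (nat set \<Rightarrow> 'e) set" where
  "EV sm E0 E1 V mu = {x \<in> Eset E0 E1 mu. Emap sm geps x \<in> V}"

definition dewitt :: "('r::comm_ring_1 \<Rightarrow> 'e::{comm_monoid_add,topological_space} \<Rightarrow> 'e) \<Rightarrow> 'e set \<Rightarrow> 'e set
    \<Rightarrow> gobj \<Rightarrow> (nat set \<Rightarrow> 'e) topology" where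
  "dewitt sm E0 E1 lam = pullback_topology (Eset E0 E1 lam) (Emap sm geps) (Etop E0 E1 (Fin 0))"

end

theory Submission
  imports Defs
begin

text \<open>The rescaling morphisms \<open>\<theta>\<^sub>i \<mapsto> t \<theta>\<^sub>i\<close> connect every point \<open>x\<close> of
  \<open>E(\<lambda>)\<close> continuously to its body \<open>\<epsilon>(x)\<close> at \<open>t = 0\<close>. So if \<open>\<epsilon>(x)\<close> lies in an open
  subfunctor \<open>\<U>\<close>, then so does the rescaled point for all \<open>t\<close> in a neighbourhood of \<open>0\<close>;
  by density this neighbourhood contains a unit \<open>t\<close>, and rescaling by \<open>t\<^sup>-\<^sup>1\<close> brings
  the point back to \<open>x\<close>. Hence \<open>\<U>(\<lambda>) = \<epsilon>\<^sup>-\<^sup>1(\<U>(R))\<close>, which gives openness in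
  the DeWitt topology, uniqueness and the formula for \<open>\<U>\<close>; conversely \<open>E\<^sub>V\<close> is an open
  subfunctor for every open \<open>V\<close>.\<close>

lemma topsmod_add_scale: "topsmod sm E0 E1 \<Longrightarrow> sm (a + b) x = sm a x + sm b x"
  by (simp add: topsmod_def)

lemma topsmod_scale_add: "topsmod sm E0 E1 \<Longrightarrow> sm a (x + y) = sm a x + sm a y"
  by (simp add: topsmod_def)

lemma topsmod_zero_scale: "topsmod sm E0 E1 \<Longrightarrow> sm 0 x = 0"
  using topsmod_add_scale[of sm E0 E1 0 0 x] by simp

lemma topsmod_scale_zero: "topsmod sm E0 E1 \<Longrightarrow> sm a 0 = 0"
  using topsmod_scale_add[of sm E0 E1 a 0 0] by simp

lemma topsmod_one_scale: "topsmod sm E0 E1 \<Longrightarrow> sm 1 x = x"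
  by (simp add: topsmod_def)

lemma topsmod_mult_scale: "topsmod sm E0 E1 \<Longrightarrow> sm (a * b) x = sm a (sm b x)"
  by (simp add: topsmod_def)

lemma sum_in_additive_closed:
  assumes "0 \<in> E" "\<forall>x\<in>E. \<forall>y\<in>E. x + y \<in> E" "\<forall>i\<in>S. f i \<in> E"
  shows "sum f S \<in> E"
proof (cases "finite S")
  case True
  then show ?thesis using assms(3)
    by (induction S rule: finite_induct) (auto simp: assms(1,2))
qed (simp add: assms(1))

lemma idx_ok_finite: "idx_ok mu I \<Longrightarrow> finite I"
  by (cases mu) (auto intro: finite_subset)

lemma idx_ok_subset: "idx_ok mu I \<Longrightarrow> J \<subseteq> I \<Longrightarrow> idx_ok mu J"
  by (cases mu) (auto intro: finite_subset)

lemma theta_in_grass: "idx_ok mu I \<Longrightarrow> theta I \<in> grass mu"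
  unfolding grass_def theta_def by auto

lemma Eset_finite_support: "x \<in> Eset E0 E1 mu \<Longrightarrow> finite {I. x I \<noteq> 0}"
  by (simp add: Eset_def tens_set_def)

lemma Eset_idx_ok: "x \<in> Eset E0 E1 mu \<Longrightarrow> x I \<noteq> 0 \<Longrightarrow> idx_ok mu I"
  by (simp add: Eset_def tens_set_def)

lemma Eset_parity: "x \<in> Eset E0 E1 mu \<Longrightarrow> x I \<in> (if even (card I) then E0 else E1)"
  by (simp add: Eset_def)

text \<open>\<open>\<theta>\<^sub>I \<mapsto> t\<^bsup>|I|\<^esup> \<theta>\<^sub>I\<close>, the morphism determined by \<open>\<theta>\<^sub>i \<mapsto> t \<theta>\<^sub>i\<close>.\<close>

definition grass_scale :: "'r::comm_ring_1 \<Rightarrow> (nat set \<Rightarrow> 'r) \<Rightarrow> nat set \<Rightarrow> 'r" where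
  "grass_scale t g = (\<lambda>I. t ^ card I * g I)"

lemma gmorph_Fin0_id: "gmorph (Fin 0) mu id"
proof -
  have "grass (Fin 0) \<subseteq> grass mu"
    unfolding grass_def by (cases mu) auto
  then show ?thesis unfolding gmorph_def by auto
qed

lemma geps_gmul: "geps (gmul g h) = gmul (geps g) (geps h)"
proof
  fix K :: "nat set"
  show "geps (gmul g h) K = gmul (geps g) (geps h) K"
  proof (cases "K = {}")
    case True
    then show ?thesis by (simp add: geps_def gmul_def gsign_def)
  next
    case False
    moreover have "(\<Sum>I\<in>Pow K. gsign I (K - I) * geps g I * geps h (K - I)) = 0"
      by (rule sum.neutral) (use False in \<open>auto simp: geps_def\<close>)
    ultimately show ?thesis by (simp add: geps_def gmul_def)
  qed
qed

lemma gmorph_geps: "gmorph mu (Fin 0) geps"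
  unfolding gmorph_def using geps_gmul[unfolded geps_def]
  by (auto simp: grass_def geps_def gone_def is_even_def is_odd_def)

lemma grass_scale_gmul: "grass_scale t (gmul g h) = gmul (grass_scale t g) (grass_scale t h)"
proof
  fix K :: "nat set"
  show "grass_scale t (gmul g h) K = gmul (grass_scale t g) (grass_scale t h) K"
  proof (cases "finite K")
    case True
    have "grass_scale t (gmul g h) K = (\<Sum>I\<in>Pow K. t ^ card K * (gsign I (K - I) * g I * h (K - I)))"
      using True by (simp add: grass_scale_def gmul_def sum_distrib_left)
    also have "\<dots> = (\<Sum>I\<in>Pow K. gsign I (K - I) * (t ^ card I * g I) * (t ^ card (K - I) * h (K - I)))"
    proof (rule sum.cong)
      fix I assume "I \<in> Pow K"
      then have "card K = card I + card (K - I)"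
        using True by (metis PowD card_Diff_subset card_mono le_add_diff_inverse finite_subset)
      then show "t ^ card K * (gsign I (K - I) * g I * h (K - I))
          = gsign I (K - I) * (t ^ card I * g I) * (t ^ card (K - I) * h (K - I))"
        by (simp add: power_add algebra_simps)
    qed simp
    also have "\<dots> = gmul (grass_scale t g) (grass_scale t h) K"
      using True by (simp add: grass_scale_def gmul_def)
    finally show ?thesis .
  qed (simp add: grass_scale_def gmul_def)
qed

lemma gmorph_grass_scale: "gmorph mu mu (grass_scale t)"
  unfolding gmorph_def using grass_scale_gmul[unfolded grass_scale_def]
  by (auto simp: grass_def grass_scale_def gone_def is_even_def is_odd_def algebra_simps)
    (force, metis (mono_tags, lifting) finite_subset mem_Collect_eq mult_zero_left subsetI)

lemma gmul_theta_singleton: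
  assumes "i \<notin> J" "finite J"
  shows "gmul (theta {i}) (theta J) = (\<lambda>K. gsign {i} J * (theta (insert i J) K :: 'r::comm_ring_1))"
proof
  fix K :: "nat set"
  show "gmul (theta {i}) (theta J) K = gsign {i} J * (theta (insert i J) K :: 'r)"
  proof (cases "finite K")
    case True
    have "gmul (theta {i}) (theta J) K
        = (\<Sum>I\<in>Pow K. if {i} = I then gsign {i} (K - {i}) * (theta J (K - {i}) :: 'r) else 0)"
      unfolding gmul_def using True by (simp only: if_True) (intro sum.cong, auto simp: theta_def)
    also have "\<dots> = (if {i} \<in> Pow K then gsign {i} (K - {i}) * theta J (K - {i}) else 0)"
      using True by (simp add: sum.delta)
    also have "\<dots> = gsign {i} J * theta (insert i J) K"
      using assms by (auto simp: theta_def)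
    finally show ?thesis .
  next
    case False
    then have "K \<noteq> insert i J" using assms by auto
    then show ?thesis using False by (simp add: gmul_def theta_def)
  qed
qed

lemma gsign_square: "gsign I J * gsign I J = (1::'r::comm_ring_1)"
  unfolding gsign_def by (simp add: power_add[symmetric] mult_2[symmetric] power_mult)

text \<open>A nonempty monomial \<open>\<theta>\<^sub>I\<close> is, up to sign, a product \<open>\<theta>\<^sub>i \<theta>\<^sub>J\<close> whose first factor is
  odd; an even morphism sends it to an odd element, which has no body.\<close>

lemma gmorph_theta_body:
  fixes phi :: "(nat set \<Rightarrow> 'r::comm_ring_1) \<Rightarrow> nat set \<Rightarrow> 'r"
  assumes phi: "gmorph mu mu' phi" and I: "idx_ok mu I"
  shows "phi (theta I) {} = (if I = {} then 1 else 0)"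
proof (cases "I = {}")
  case True
  have "theta {} = (gone :: nat set \<Rightarrow> 'r)" by (auto simp: theta_def gone_def)
  then show ?thesis using True phi by (simp add: gmorph_def gone_def)
next
  case False
  then obtain i where i: "i \<in> I" by auto
  define J where "J = I - {i}"
  define c :: 'r where "c = gsign {i} J"
  have iJ: "i \<notin> J" "finite J" "insert i J = I"
    using idx_ok_finite[OF I] i by (auto simp: J_def)
  have i_grass: "(theta {i} :: nat set \<Rightarrow> 'r) \<in> grass mu"
    by (rule theta_in_grass) (use I i idx_ok_subset in blast)
  have J_grass: "(theta J :: nat set \<Rightarrow> 'r) \<in> grass mu"
    by (rule theta_in_grass) (use I idx_ok_subset J_def in blast)
  have prod: "gmul (theta {i}) (theta J) = (\<lambda>K. c * (theta I K :: 'r))"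
    using gmul_theta_singleton[OF iJ(1,2)] iJ(3) by (simp add: c_def)
  have theta_I: "theta I = (\<lambda>K. c * (gmul (theta {i}) (theta J) K :: 'r))"
    unfolding prod by (simp add: c_def mult.assoc[symmetric] gsign_square del: mult.assoc)
  have "(\<lambda>K. c * (theta I K :: 'r)) \<in> grass mu"
    unfolding grass_def using I by (auto simp: theta_def intro: finite_subset[of _ "{I}"])
  then have prod_grass: "(gmul (theta {i}) (theta J) :: nat set \<Rightarrow> 'r) \<in> grass mu"
    by (simp only: prod)
  have "phi (theta I) = (\<lambda>K. c * phi (gmul (theta {i}) (theta J)) K)"
    using phi prod_grass unfolding gmorph_def by (subst theta_I) blast
  also have "\<dots> = (\<lambda>K. c * gmul (phi (theta {i})) (phi (theta J)) K)"
    using phi i_grass J_grass unfolding gmorph_def by metis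
  finally have body: "phi (theta I) {} = c * gmul (phi (theta {i})) (phi (theta J)) {}" by simp
  have "is_odd (theta {i} :: nat set \<Rightarrow> 'r)" by (auto simp: is_odd_def theta_def)
  then have "is_odd (phi (theta {i}))" using phi i_grass unfolding gmorph_def by blast
  then have "phi (theta {i}) {} = 0" by (simp add: is_odd_def)
  then show ?thesis using body False by (simp add: gmul_def)
qed

lemma gmorph_theta_parity:
  fixes phi :: "(nat set \<Rightarrow> 'r::comm_ring_1) \<Rightarrow> nat set \<Rightarrow> 'r"
  assumes phi: "gmorph mu mu' phi" and I: "idx_ok mu I" and nz: "phi (theta I) J \<noteq> 0"
  shows "even (card J) = even (card I)"
proof (cases "even (card I)")
  case True
  have "is_even (theta I :: nat set \<Rightarrow> 'r)" using True by (auto simp: is_even_def theta_def)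
  then have "is_even (phi (theta I))" using phi theta_in_grass[OF I] unfolding gmorph_def by blast
  then show ?thesis using nz True by (auto simp: is_even_def)
next
  case False
  have "is_odd (theta I :: nat set \<Rightarrow> 'r)" using False by (auto simp: is_odd_def theta_def)
  then have "is_odd (phi (theta I))" using phi theta_in_grass[OF I] unfolding gmorph_def by blast
  then show ?thesis using nz False by (auto simp: is_odd_def)
qed

lemma Emap_geps:
  assumes "topsmod sm E0 E1" "finite {I. x I \<noteq> 0}"
  shows "Emap sm geps x = (\<lambda>J. if J = {} then x {} else 0)"
proof
  fix J
  have "Emap sm geps x J = (\<Sum>I\<in>{I. x I \<noteq> 0}. if I = {} then (if J = {} then x I else 0) else 0)"
    unfolding Emap_def using assms(1)
    by (intro sum.cong) (auto simp: geps_def theta_def topsmod_zero_scale topsmod_one_scale)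
  also have "\<dots> = (if J = {} then x {} else 0)"
    using assms(2) by (simp add: sum.delta')
  finally show "Emap sm geps x J = (if J = {} then x {} else 0)" .
qed

lemma Emap_id:
  assumes "topsmod sm E0 E1" "finite {I. x I \<noteq> 0}"
  shows "Emap sm id x = x"
proof
  fix J
  have "Emap sm id x J = (\<Sum>I\<in>{I. x I \<noteq> 0}. if I = J then x I else 0)"
    unfolding Emap_def using assms(1)
    by (intro sum.cong) (auto simp: theta_def topsmod_zero_scale topsmod_one_scale)
  then show "Emap sm id x J = x J" using assms(2) by (simp add: sum.delta')
qed

lemma Emap_grass_scale:
  assumes "topsmod sm E0 E1" "finite {I. x I \<noteq> 0}"
  shows "Emap sm (grass_scale t) x = (\<lambda>J. sm (t ^ card J) (x J))"
proof
  fix J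
  have "Emap sm (grass_scale t) x J = (\<Sum>I\<in>{I. x I \<noteq> 0}. if I = J then sm (t ^ card J) (x I) else 0)"
    unfolding Emap_def using assms(1)
    by (intro sum.cong) (auto simp: grass_scale_def theta_def topsmod_zero_scale)
  also have "\<dots> = sm (t ^ card J) (x J)"
    using assms by (simp add: sum.delta' topsmod_scale_zero)
  finally show "Emap sm (grass_scale t) x J = sm (t ^ card J) (x J)" .
qed

lemma Emap_grass_scale_zero:
  assumes sm: "topsmod sm E0 E1" and x: "x \<in> Eset E0 E1 mu"
  shows "Emap sm (grass_scale 0) x = Emap sm geps x"
proof
  fix J :: "nat set"
  have "sm (0 ^ card J) (x J) = (if J = {} then x {} else 0)"
  proof (cases "J = {} \<or> x J = 0")
    case True
    then show ?thesis by (auto simp: topsmod_one_scale[OF sm] topsmod_scale_zero[OF sm])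
  next
    case False
    then have "card J \<noteq> 0" using idx_ok_finite[OF Eset_idx_ok[OF x]] by simp
    then show ?thesis using False by (simp add: zero_power topsmod_zero_scale[OF sm])
  qed
  then show "Emap sm (grass_scale 0) x J = Emap sm geps x J"
    by (simp add: Emap_grass_scale[OF sm] Emap_geps[OF sm] Eset_finite_support[OF x])
qed

lemma Emap_in_Eset:
  assumes sm: "topsmod sm E0 E1" and phi: "gmorph mu mu' phi" and x: "x \<in> Eset E0 E1 mu"
  shows "Emap sm phi x \<in> Eset E0 E1 mu'"
proof -
  define S where "S = {I. x I \<noteq> 0}"
  have fin_S: "finite S" using Eset_finite_support[OF x] by (simp add: S_def)
  have nz: "\<exists>I\<in>S. phi (theta I) J \<noteq> 0" if "Emap sm phi x J \<noteq> 0" for J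
  proof (rule ccontr)
    assume "\<not> ?thesis"
    then have "Emap sm phi x J = 0"
      unfolding Emap_def S_def[symmetric] by (intro sum.neutral) (auto simp: topsmod_zero_scale[OF sm])
    with that show False by simp
  qed
  have grass: "phi (theta I) \<in> grass mu'" if "I \<in> S" for I
    using phi theta_in_grass[OF Eset_idx_ok[OF x]] that unfolding gmorph_def S_def by blast
  have idx: "idx_ok mu' J" if "Emap sm phi x J \<noteq> 0" for J
    using nz[OF that] grass by (auto simp: grass_def)
  have fin: "finite {J. Emap sm phi x J \<noteq> 0}"
  proof (rule finite_subset)
    show "{J. Emap sm phi x J \<noteq> 0} \<subseteq> (\<Union>I\<in>S. {J. phi (theta I) J \<noteq> 0})" using nz by blast
    show "finite (\<Union>I\<in>S. {J. phi (theta I) J \<noteq> 0})" using fin_S grass by (auto simp: grass_def)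
  qed
  have E0: "0 \<in> E0" "\<forall>x\<in>E0. \<forall>y\<in>E0. x + y \<in> E0" "\<forall>a. \<forall>x\<in>E0. sm a x \<in> E0"
   and E1: "0 \<in> E1" "\<forall>x\<in>E1. \<forall>y\<in>E1. x + y \<in> E1" "\<forall>a. \<forall>x\<in>E1. sm a x \<in> E1"
    using sm by (auto simp: topsmod_def)
  have parity: "Emap sm phi x J \<in> (if even (card J) then E0 else E1)" for J
  proof -
    have "sm (phi (theta I) J) (x I) \<in> (if even (card J) then E0 else E1)" if "I \<in> S" for I
    proof (cases "phi (theta I) J = 0")
      case True
      then show ?thesis using E0 E1 by (simp add: topsmod_zero_scale[OF sm])
    next
      case False
      then have "even (card J) = even (card I)"
        using gmorph_theta_parity[OF phi Eset_idx_ok[OF x]] that S_def by blast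
      then show ?thesis using Eset_parity[OF x, of I] E0 E1 by auto
    qed
    then show ?thesis unfolding Emap_def S_def[symmetric]
      by (intro sum_in_additive_closed) (use E0 E1 in auto)
  qed
  show ?thesis unfolding Eset_def tens_set_def using idx fin parity by auto
qed

lemma Emap_geps_Emap_gmorph:
  assumes sm: "topsmod sm E0 E1" and phi: "gmorph mu mu' phi" and x: "x \<in> Eset E0 E1 mu"
  shows "Emap sm geps (Emap sm phi x) = Emap sm geps x"
proof -
  have "Emap sm phi x {} = (\<Sum>I\<in>{I. x I \<noteq> 0}. if I = {} then x I else 0)"
    unfolding Emap_def using sm
    by (intro sum.cong refl) (auto simp: gmorph_theta_body[OF phi Eset_idx_ok[OF x]]
        topsmod_zero_scale topsmod_one_scale)
  also have "\<dots> = x {}" using Eset_finite_support[OF x] by (simp add: sum.delta')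
  finally have "Emap sm phi x {} = x {}" .
  then show ?thesis
    by (simp only: Emap_geps[OF sm Eset_finite_support[OF Emap_in_Eset[OF sm phi x]]]
        Emap_geps[OF sm Eset_finite_support[OF x]])
qed

lemma Emap_grass_scale_inverse:
  assumes sm: "topsmod sm E0 E1" and x: "x \<in> Eset E0 E1 mu" and tv: "t * v = 1"
  shows "Emap sm (grass_scale v) (Emap sm (grass_scale t) x) = x"
proof -
  have "Emap sm (grass_scale v) (Emap sm (grass_scale t) x)
      = (\<lambda>J. sm (v ^ card J) (sm (t ^ card J) (x J)))"
    using Eset_finite_support[OF Emap_in_Eset[OF sm gmorph_grass_scale x]]
    by (simp add: Emap_grass_scale[OF sm] Eset_finite_support[OF x])
  also have "\<dots> = (\<lambda>J. sm ((t * v) ^ card J) (x J))"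
    by (simp add: topsmod_mult_scale[OF sm, symmetric] power_mult_distrib mult.commute)
  finally show ?thesis using tv by (simp add: topsmod_one_scale[OF sm])
qed

lemma topspace_ptop: "topspace (ptop N) = {f. \<forall>I. \<not> I \<subseteq> {..<N} \<longrightarrow> f I = 0}"
  unfolding ptop_def by (auto simp: topspace_product_topology PiE_def Pi_def split: if_splits)

lemma topspace_ptop_subset_tens_set: "topspace (ptop N) \<subseteq> tens_set Inf"
proof
  fix f assume "f \<in> topspace (ptop N)"
  then have supp: "\<And>I. f I \<noteq> 0 \<Longrightarrow> I \<subseteq> {..<N}" by (auto simp: topspace_ptop)
  then have "{I. f I \<noteq> 0} \<subseteq> Pow {..<N}" by auto
  then have "finite {I. f I \<noteq> 0}" by (rule finite_subset) simp
  then show "f \<in> tens_set Inf" using supp by (auto simp: tens_set_def intro: finite_subset)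
qed

lemma topspace_ptop_eq_tens_set: "topspace (ptop n) = tens_set (Fin n)"
proof -
  have "finite {I. f I \<noteq> 0}" if "f \<in> topspace (ptop n)" for f :: "nat set \<Rightarrow> 'a"
    using that topspace_ptop_subset_tens_set by (auto simp: tens_set_def)
  then show ?thesis by (auto simp: topspace_ptop tens_set_def)
qed

lemma istopology_tens_Inf:
  "istopology (\<lambda>U. U \<subseteq> tens_set Inf \<and> (\<forall>N. openin (ptop N) (U \<inter> topspace (ptop N))))"
  unfolding istopology_def
proof (rule conjI; intro allI impI)
  fix S T :: "(nat set \<Rightarrow> 'a) set"
  assume S: "S \<subseteq> tens_set Inf \<and> (\<forall>N. openin (ptop N) (S \<inter> topspace (ptop N)))"
    and T: "T \<subseteq> tens_set Inf \<and> (\<forall>N. openin (ptop N) (T \<inter> topspace (ptop N)))"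
  have "S \<inter> T \<inter> topspace (ptop N) = (S \<inter> topspace (ptop N)) \<inter> (T \<inter> topspace (ptop N))" for N
    by auto
  then show "S \<inter> T \<subseteq> tens_set Inf \<and> (\<forall>N. openin (ptop N) (S \<inter> T \<inter> topspace (ptop N)))"
    using S T by (auto simp: openin_Int)
next
  fix K :: "(nat set \<Rightarrow> 'a) set set"
  assume K: "\<forall>U\<in>K. U \<subseteq> tens_set Inf \<and> (\<forall>N. openin (ptop N) (U \<inter> topspace (ptop N)))"
  have "openin (ptop N) (\<Union>K \<inter> topspace (ptop N))" for N
  proof -
    have "\<Union>K \<inter> topspace (ptop N) = \<Union>((\<lambda>U. U \<inter> topspace (ptop N)) ` K)" by auto
    moreover have "openin (ptop N) (\<Union>((\<lambda>U. U \<inter> topspace (ptop N)) ` K))"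
      using K by (intro openin_Union) auto
    ultimately show ?thesis by simp
  qed
  then show "\<Union>K \<subseteq> tens_set Inf \<and> (\<forall>N. openin (ptop N) (\<Union>K \<inter> topspace (ptop N)))"
    using K by blast
qed

lemma openin_tens_top_Inf:
  "openin (tens_top Inf) U \<longleftrightarrow> U \<subseteq> tens_set Inf \<and> (\<forall>N. openin (ptop N) (U \<inter> topspace (ptop N)))"
  unfolding tens_top_def gobj.case topology_inverse'[OF istopology_tens_Inf] ..

lemma openin_tens_top_stage:
  assumes T: "openin (tens_top mu) T" and x: "x \<in> Eset E0 E1 mu"
  obtains N where "\<And>J. \<not> J \<subseteq> {..<N} \<Longrightarrow> x J = 0"
    and "openin (ptop N) (T \<inter> topspace (ptop N))"
proof (cases mu)
  case (Fin n)
  then have "T \<subseteq> topspace (ptop n)" using openin_subset[OF T] by (simp add: tens_top_def)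
  then have "openin (ptop n) (T \<inter> topspace (ptop n))"
    using T Fin by (simp add: tens_top_def Int_absorb2)
  moreover have "\<And>J. \<not> J \<subseteq> {..<n} \<Longrightarrow> x J = 0" using Eset_idx_ok[OF x] Fin by fastforce
  ultimately show ?thesis using that by blast
next
  case Inf
  then have "finite (\<Union>{I. x I \<noteq> 0})"
    using Eset_finite_support[OF x] Eset_idx_ok[OF x] by auto
  then obtain N where "\<Union>{I. x I \<noteq> 0} \<subseteq> {..<N}" using finite_nat_bounded by blast
  then have "\<And>J. \<not> J \<subseteq> {..<N} \<Longrightarrow> x J = 0" by blast
  moreover have "openin (ptop N) (T \<inter> topspace (ptop N))" using T Inf openin_tens_top_Inf by blast
  ultimately show ?thesis using that by blast
qed

lemma continuous_on_scale_power:
  fixes sm :: "'r::{comm_ring_1, topological_semigroup_mult, topological_group_add, t2_space}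
               \<Rightarrow> 'e::{ab_group_add, topological_group_add, t2_space} \<Rightarrow> 'e"
  assumes sm: "topsmod sm E0 E1"
  shows "continuous_on UNIV (\<lambda>t. sm (t ^ n) e)"
proof -
  have "continuous_on UNIV (\<lambda>t::'r. t ^ n)"
    by (induction n) (auto intro!: continuous_intros)
  then have "continuous_on UNIV ((\<lambda>p. sm (fst p) (snd p)) \<circ> (\<lambda>t. (t ^ n, e)))"
    using sm unfolding topsmod_def
    by (intro continuous_on_compose) (auto intro!: continuous_intros intro: continuous_on_subset)
  then show ?thesis by (simp add: o_def)
qed

lemma continuous_map_scale_path:
  assumes sm: "topsmod sm E0 E1" and supp: "\<And>J. \<not> J \<subseteq> {..<N} \<Longrightarrow> x J = 0"
  shows "continuous_map euclidean (ptop N) (\<lambda>t. \<lambda>J. sm (t ^ card J) (x J))"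
  unfolding ptop_def continuous_map_componentwise_UNIV
proof
  fix J :: "nat set"
  show "continuous_map euclidean (if J \<subseteq> {..<N} then euclidean else top_of_set {0})
      (\<lambda>t. sm (t ^ card J) (x J))"
  proof (cases "J \<subseteq> {..<N}")
    case True
    then show ?thesis using continuous_on_scale_power[OF sm] by simp
  next
    case False
    then show ?thesis using supp[OF False] by (simp add: topsmod_scale_zero[OF sm])
  qed
qed

lemma continuous_map_body_embedding:
  "continuous_map euclidean (ptop 0) (\<lambda>e::'e::{zero,topological_space}. \<lambda>J::nat set. if J = {} then e else 0)"
  unfolding ptop_def continuous_map_componentwise_UNIV
proof
  fix J :: "nat set"
  show "continuous_map euclidean (if J \<subseteq> {..<0} then euclidean else top_of_set {0})
      (\<lambda>e::'e. if J = {} then e else 0)"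
    by (cases "J = {}") auto
qed

lemma continuous_map_body: "continuous_map (ptop N) euclidean (\<lambda>x::nat set \<Rightarrow> 'e::{zero,topological_space}. x {})"
proof -
  have "continuous_map (ptop N) ((\<lambda>I. if I \<subseteq> {..<N} then euclidean else top_of_set {0}) {})
      (\<lambda>x::nat set \<Rightarrow> 'e. x {})"
    unfolding ptop_def by (rule continuous_map_product_projection) simp
  then show ?thesis by simp
qed

lemma open_grass_scale_preimage:
  assumes sm: "topsmod sm E0 E1" and T: "openin (tens_top mu) T" and x: "x \<in> Eset E0 E1 mu"
  shows "open {t. Emap sm (grass_scale t) x \<in> T}"
proof -
  obtain N where supp: "\<And>J. \<not> J \<subseteq> {..<N} \<Longrightarrow> x J = 0"
    and T_N: "openin (ptop N) (T \<inter> topspace (ptop N))"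
    using openin_tens_top_stage[OF T x] by blast
  define path where "path t = (\<lambda>J. sm (t ^ card J) (x J))" for t
  have "path t \<in> topspace (ptop N)" for t
    using supp by (simp add: path_def topspace_ptop topsmod_scale_zero[OF sm])
  moreover have "Emap sm (grass_scale t) x = path t" for t
    unfolding path_def by (rule Emap_grass_scale[OF sm Eset_finite_support[OF x]])
  ultimately have "{t. Emap sm (grass_scale t) x \<in> T}
      = {t \<in> topspace euclidean. path t \<in> T \<inter> topspace (ptop N)}"
    by auto
  moreover have "openin euclidean {t \<in> topspace euclidean. path t \<in> T \<inter> topspace (ptop N)}"
    unfolding path_def
    by (rule openin_continuous_map_preimage[OF continuous_map_scale_path[OF sm supp] T_N])
  ultimately show ?thesis by (simp only: open_openin)
qed

lemma open_subfunctor_eq_EV: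
  fixes sm :: "'r::{comm_ring_1, topological_semigroup_mult, topological_group_add, t2_space}
               \<Rightarrow> 'e::{ab_group_add, topological_group_add, t2_space} \<Rightarrow> 'e"
  assumes dense: "top_ring_dense_units TYPE('r)" and sm: "topsmod sm E0 E1"
    and UU: "open_subfunctor sm E0 E1 UU"
  shows "UU mu = EV sm E0 E1 (UU (Fin 0)) mu"
proof
  have sub: "\<And>mu. UU mu \<subseteq> Eset E0 E1 mu"
    and funct: "\<And>mu mu' phi x. gmorph mu mu' phi \<Longrightarrow> x \<in> UU mu \<Longrightarrow> Emap sm phi x \<in> UU mu'"
    and op: "openin (Etop E0 E1 mu) (UU mu)"
    using UU unfolding open_subfunctor_def subfunctor_def by blast+
  show "UU mu \<subseteq> EV sm E0 E1 (UU (Fin 0)) mu"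
    using sub funct[OF gmorph_geps] by (auto simp: EV_def)
  show "EV sm E0 E1 (UU (Fin 0)) mu \<subseteq> UU mu"
  proof
    fix x assume "x \<in> EV sm E0 E1 (UU (Fin 0)) mu"
    then have x: "x \<in> Eset E0 E1 mu" and body: "Emap sm geps x \<in> UU (Fin 0)" by (auto simp: EV_def)
    obtain T where T: "openin (tens_top mu) T" and UU_T: "UU mu = T \<inter> Eset E0 E1 mu"
      using op unfolding Etop_def openin_subtopology by blast
    have "Emap sm geps x \<in> Eset E0 E1 (Fin 0)" using sub body by blast
    then have "Emap sm id (Emap sm geps x) = Emap sm geps x"
      by (intro Emap_id[OF sm] Eset_finite_support)
    then have "Emap sm geps x \<in> UU mu" using funct[OF gmorph_Fin0_id body] by simp
    then have "Emap sm (grass_scale 0) x \<in> T" using UU_T Emap_grass_scale_zero[OF sm x] by simp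
    then have "{t. Emap sm (grass_scale t) x \<in> T} \<inter> {u::'r. \<exists>v. u * v = 1} \<noteq> {}"
      using open_grass_scale_preimage[OF sm T x] dense
        open_Int_closure_eq_empty[of _ "{u::'r. \<exists>v. u * v = 1}"]
      by (auto simp: top_ring_dense_units_def)
    then obtain t v :: 'r where t: "Emap sm (grass_scale t) x \<in> T" and tv: "t * v = 1" by blast
    have "Emap sm (grass_scale t) x \<in> UU mu"
      using t UU_T Emap_in_Eset[OF sm gmorph_grass_scale x] by blast
    then have "Emap sm (grass_scale v) (Emap sm (grass_scale t) x) \<in> UU mu"
      by (rule funct[OF gmorph_grass_scale])
    moreover have "Emap sm (grass_scale v) (Emap sm (grass_scale t) x) = x"
      using Emap_grass_scale_inverse[OF sm x] tv by simp
    ultimately show "x \<in> UU mu" by simp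
  qed
qed

lemma open_subfunctor_body_image:
  assumes sm: "topsmod sm E0 E1" and UU: "open_subfunctor sm E0 E1 UU"
  shows "Emap sm geps ` UU lam = UU (Fin 0)"
proof
  have sub: "\<And>mu. UU mu \<subseteq> Eset E0 E1 mu"
    and funct: "\<And>mu mu' phi x. gmorph mu mu' phi \<Longrightarrow> x \<in> UU mu \<Longrightarrow> Emap sm phi x \<in> UU mu'"
    using UU unfolding open_subfunctor_def subfunctor_def by blast+
  show "Emap sm geps ` UU lam \<subseteq> UU (Fin 0)" using funct[OF gmorph_geps] by blast
  show "UU (Fin 0) \<subseteq> Emap sm geps ` UU lam"
  proof
    fix y assume y: "y \<in> UU (Fin 0)"
    then have y_Fin0: "y \<in> Eset E0 E1 (Fin 0)" using sub by blast
    have "y \<in> UU lam"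
      using funct[OF gmorph_Fin0_id y] Emap_id[OF sm Eset_finite_support[OF y_Fin0]] by simp
    moreover have "Emap sm geps y = y"
      using Emap_geps[OF sm Eset_finite_support[OF y_Fin0]] Eset_idx_ok[OF y_Fin0] by fastforce
    ultimately show "y \<in> Emap sm geps ` UU lam" by (metis image_eqI)
  qed
qed

lemma openin_EV:
  fixes sm :: "'r::{comm_ring_1, topological_semigroup_mult, topological_group_add, t2_space}
               \<Rightarrow> 'e::{ab_group_add, topological_group_add, t2_space} \<Rightarrow> 'e"
  assumes sm: "topsmod sm E0 E1" and W: "openin (Etop E0 E1 (Fin 0)) W"
  shows "openin (Etop E0 E1 mu) (EV sm E0 E1 W mu)"
proof -
  obtain W0 where W0: "openin (ptop 0) W0" and W_W0: "W = W0 \<inter> Eset E0 E1 (Fin 0)"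
    using W unfolding Etop_def openin_subtopology by (auto simp: tens_top_def)
  define c where "c e = (\<lambda>J::nat set. if J = {} then e else (0::'e))" for e
  define W' where "W' = {e. c e \<in> W0}"
  have open_W': "openin euclidean W'"
    using openin_continuous_map_preimage[OF continuous_map_body_embedding W0]
    by (simp add: W'_def c_def)
  have zeros: "0 \<in> E0" "0 \<in> E1" using sm by (auto simp: topsmod_def)
  have EV_iff: "x \<in> EV sm E0 E1 W mu \<longleftrightarrow> x \<in> Eset E0 E1 mu \<and> x {} \<in> W'" for x
  proof (cases "x \<in> Eset E0 E1 mu")
    case True
    have "c (x {}) \<in> Eset E0 E1 (Fin 0)"
      using Eset_parity[OF True, of "{}"] zeros
      by (auto simp: c_def Eset_def tens_set_def intro: finite_subset[of _ "{{}}"])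
    moreover have "Emap sm geps x = c (x {})"
      unfolding c_def by (rule Emap_geps[OF sm Eset_finite_support[OF True]])
    ultimately show ?thesis using True by (auto simp: EV_def W_W0 W'_def)
  qed (simp add: EV_def)
  define T where "T = {x \<in> tens_set mu. x {} \<in> W'}"
  have "Eset E0 E1 mu \<subseteq> tens_set mu" unfolding Eset_def by blast
  then have "EV sm E0 E1 W mu = T \<inter> Eset E0 E1 mu"
    unfolding T_def using EV_iff by blast
  moreover have "openin (tens_top mu) T"
  proof (cases mu)
    case (Fin n)
    then show ?thesis
      using openin_continuous_map_preimage[OF continuous_map_body open_W']
      by (simp add: T_def tens_top_def topspace_ptop_eq_tens_set)
  next
    case Inf
    have "T \<inter> topspace (ptop N) = {x \<in> topspace (ptop N). x {} \<in> W'}" for N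
      using topspace_ptop_subset_tens_set Inf by (auto simp: T_def)
    then show ?thesis
      using openin_continuous_map_preimage[OF continuous_map_body open_W'] Inf
      by (simp add: openin_tens_top_Inf T_def)
  qed
  ultimately show ?thesis unfolding Etop_def openin_subtopology by blast
qed

lemma open_subfunctor_EV:
  fixes sm :: "'r::{comm_ring_1, topological_semigroup_mult, topological_group_add, t2_space}
               \<Rightarrow> 'e::{ab_group_add, topological_group_add, t2_space} \<Rightarrow> 'e"
  assumes sm: "topsmod sm E0 E1" and W: "openin (Etop E0 E1 (Fin 0)) W"
  shows "open_subfunctor sm E0 E1 (EV sm E0 E1 W)"
  unfolding open_subfunctor_def subfunctor_def
proof (intro conjI allI impI)
  show "EV sm E0 E1 W mu \<subseteq> Eset E0 E1 mu" for mu by (auto simp: EV_def)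
  show "Emap sm phi ` EV sm E0 E1 W mu \<subseteq> EV sm E0 E1 W mu'" if "gmorph mu mu' phi" for mu mu' phi
    using Emap_in_Eset[OF sm that] Emap_geps_Emap_gmorph[OF sm that] by (auto simp: EV_def)
  show "openin (Etop E0 E1 mu) (EV sm E0 E1 W mu)" for mu
    by (rule openin_EV[OF sm W])
qed

lemma openin_dewitt_iff:
  "openin (dewitt sm E0 E1 lam) U \<longleftrightarrow> (\<exists>W. openin (Etop E0 E1 (Fin 0)) W \<and> U = EV sm E0 E1 W lam)"
  by (auto simp: dewitt_def openin_pullback_topology EV_def)

theorem proposition2p8:
  fixes sm :: "'r::{comm_ring_1, topological_semigroup_mult, topological_group_add, t2_space}
               \<Rightarrow> 'e::{ab_group_add, topological_group_add, t2_space} \<Rightarrow> 'e"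
    and E0 E1 :: "'e set"
    and lam :: gobj
    and U :: "(nat set \<Rightarrow> 'e) set"
  assumes "top_ring_dense_units TYPE('r)"
    and "topsmod sm E0 E1"
    and "U \<subseteq> Eset E0 E1 lam"
  shows "((\<exists>UU. open_subfunctor sm E0 E1 UU \<and> UU lam = U) \<longleftrightarrow> openin (dewitt sm E0 E1 lam) U)
       \<and> (\<forall>UU UU'. open_subfunctor sm E0 E1 UU \<and> UU lam = U \<and>
                   open_subfunctor sm E0 E1 UU' \<and> UU' lam = U \<longrightarrow> UU = UU')
       \<and> (\<forall>UU. open_subfunctor sm E0 E1 UU \<and> UU lam = U \<longrightarrow>
              Emap sm geps ` U = UU (Fin 0) \<and> UU = EV sm E0 E1 (Emap sm geps ` U))"
proof -
  note dense = assms(1) and sm = assms(2)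
  have formula: "Emap sm geps ` U = UU (Fin 0) \<and> UU = EV sm E0 E1 (Emap sm geps ` U)"
    if UU: "open_subfunctor sm E0 E1 UU" and "UU lam = U" for UU
  proof
    show image: "Emap sm geps ` U = UU (Fin 0)"
      using open_subfunctor_body_image[OF sm UU, of lam] that by simp
    show "UU = EV sm E0 E1 (Emap sm geps ` U)"
      unfolding image using open_subfunctor_eq_EV[OF dense sm UU] by blast
  qed
  have "(\<exists>UU. open_subfunctor sm E0 E1 UU \<and> UU lam = U) \<longleftrightarrow> openin (dewitt sm E0 E1 lam) U"
  proof
    assume "\<exists>UU. open_subfunctor sm E0 E1 UU \<and> UU lam = U"
    then obtain UU where UU: "open_subfunctor sm E0 E1 UU" and "UU lam = U" by blast
    then show "openin (dewitt sm E0 E1 lam) U"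
      using open_subfunctor_eq_EV[OF dense sm UU, of lam]
      unfolding openin_dewitt_iff open_subfunctor_def by blast
  next
    assume "openin (dewitt sm E0 E1 lam) U"
    then show "\<exists>UU. open_subfunctor sm E0 E1 UU \<and> UU lam = U"
      unfolding openin_dewitt_iff using open_subfunctor_EV[OF sm] by blast
  qed
  then show ?thesis using formula by metis
qed

end
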